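(* For any two ${\cal X}_5$ formulas $\alpha$ and $\beta$: $\alpha$ and $\beta$ are strongly equivalent on substitutions if and only if $\alpha\Leftrightarrow\beta$ is valid in ${\cal X}_5$.
   Context: Fix a set $\mathit{At}$ of atoms. An explicit literal is $p$ or $\sim p$ for $p\in\mathit{At}$; a set of explicit literals is consistent if it never contains both $p$ and $\sim p$. Formulas: $\varphi ::= p\mid\bot\mid\varphi\wedge\varphi\mid\varphi\vee\varphi\mid\varphi\to\varphi\mid\sim\varphi$; abbreviations $\neg\varphi:=\varphi\to\bot$, $\top:=\neg\bot$, $\varphi\leftrightarrow\psi:=(\varphi\to\psi)\wedge(\psi\to\varphi)$, $\varphi\Leftrightarrow\psi:=(\varphi\leftrightarrow\psi)\wedge(\sim\varphi\leftrightarrow\sim\psi)$. A theory is a set of formulas. $\varphi[\alpha/p]$ denotes the result of replacing every occurrence of atom $p$ in $\varphi$ by $\alpha$. An ${\cal X}_5$-interpretation is a pair $\langle H,T\rangle$ of consistent sets of explicit literals with $H\subseteq T$. Satisfaction $\models$ and falsification $=\!\!|\;$: $\langle H,T\rangle\not\models\bot$, $\langle H,T\rangle=\!\!|\;\bot$; $\models p$ iff $p\in H$, $=\!\!|\;p$ iff $\sim p\in H$; $\models\varphi\wedge\psi$ iff both satisfied, $=\!\!|\;\varphi\wedge\psi$ iff at least one falsified; $\models\varphi\vee\psi$ iff at least one satisfied, $=\!\!|\;\varphi\vee\psi$ iff both falsified; $\models\sim\varphi$ iff $=\!\!|\;\varphi$, $=\!\!|\;\sim\varphi$ iff $\models\varphi$;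 $\langle H,T\rangle\models\varphi\to\psi$ iff (i) $\langle H,T\rangle\not\models\varphi$ or $\langle H,T\rangle\models\psi$ and (ii) $\langle T,T\rangle\not\models\varphi$ or $\langle T,T\rangle\models\psi$; $\langle H,T\rangle=\!\!|\;\varphi\to\psi$ iff $\langle T,T\rangle\models\varphi$ and $\langle H,T\rangle=\!\!|\;\psi$. A formula is valid if satisfied by every ${\cal X}_5$-interpretation. A model of a theory satisfies all its formulas. $\langle T,T\rangle$ is an equilibrium model of $\Gamma$ if it is a model of $\Gamma$ and there is no model $\langle H,T\rangle$ of $\Gamma$ with $H\subsetneq T$. Formulas $\alpha,\beta$ are strongly equivalent on substitutions if for every formula $\varphi$, every atom $p$, and every theory $\Delta$, the theories $\Delta\cup\{\varphi[\alpha/p]\}$ and $\Delta\cup\{\varphi[\beta/p]\}$ have the same equilibrium models. *)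

theory Defs
  imports Main
begin

text \<open>Atoms are the elements of the type 'a (the fixed set At).\<close>

datatype 'a lit = Pos 'a | Neg 'a

definition consistent :: "'a lit set \<Rightarrow> bool" where
  "consistent S \<longleftrightarrow> (\<forall>p. \<not> (Pos p \<in> S \<and> Neg p \<in> S))"

datatype 'a form =
    Atom 'a
  | Bot
  | And "'a form" "'a form"
  | Or "'a form" "'a form"
  | Imp "'a form" "'a form"
  | SNeg "'a form"

definition Neg_f :: "'a form \<Rightarrow> 'a form" where
  "Neg_f \<phi> = Imp \<phi> Bot"

definition Top :: "'a form" where
  "Top = Neg_f Bot"

definition Iff :: "'a form \<Rightarrow> 'a form \<Rightarrow> 'a form" where
  "Iff \<phi> \<psi> = And (Imp \<phi> \<psi>) (Imp \<psi> \<phi>)"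

definition SIff :: "'a form \<Rightarrow> 'a form \<Rightarrow> 'a form" where
  "SIff \<phi> \<psi> = And (Iff \<phi> \<psi>) (Iff (SNeg \<phi>) (SNeg \<psi>))"

definition interp :: "'a lit set \<Rightarrow> 'a lit set \<Rightarrow> bool" where
  "interp H T \<longleftrightarrow> consistent H \<and> consistent T \<and> H \<subseteq> T"

fun sat :: "'a lit set \<Rightarrow> 'a lit set \<Rightarrow> 'a form \<Rightarrow> bool"
and fal :: "'a lit set \<Rightarrow> 'a lit set \<Rightarrow> 'a form \<Rightarrow> bool" where
  "sat H T Bot = False"
| "sat H T (Atom p) = (Pos p \<in> H)"
| "sat H T (And \<phi> \<psi>) = (sat H T \<phi> \<and> sat H T \<psi>)"
| "sat H T (Or \<phi> \<psi>) = (sat H T \<phi> \<or> sat H T \<psi>)"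
| "sat H T (SNeg \<phi>) = fal H T \<phi>"
| "sat H T (Imp \<phi> \<psi>) =
     ((\<not> sat H T \<phi> \<or> sat H T \<psi>) \<and> (\<not> sat T T \<phi> \<or> sat T T \<psi>))"
| "fal H T Bot = True"
| "fal H T (Atom p) = (Neg p \<in> H)"
| "fal H T (And \<phi> \<psi>) = (fal H T \<phi> \<or> fal H T \<psi>)"
| "fal H T (Or \<phi> \<psi>) = (fal H T \<phi> \<and> fal H T \<psi>)"
| "fal H T (SNeg \<phi>) = sat H T \<phi>"
| "fal H T (Imp \<phi> \<psi>) = (sat T T \<phi> \<and> fal H T \<psi>)"

definition valid :: "'a form \<Rightarrow> bool" where
  "valid \<phi> \<longleftrightarrow> (\<forall>H T. interp H T \<longrightarrow> sat H T \<phi>)"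

definition model :: "'a lit set \<Rightarrow> 'a lit set \<Rightarrow> 'a form set \<Rightarrow> bool" where
  "model H T \<Gamma> \<longleftrightarrow> interp H T \<and> (\<forall>\<phi>\<in>\<Gamma>. sat H T \<phi>)"

definition eq_model :: "'a lit set \<Rightarrow> 'a form set \<Rightarrow> bool" where
  "eq_model T \<Gamma> \<longleftrightarrow> model T T \<Gamma> \<and> \<not> (\<exists>H. H \<subset> T \<and> model H T \<Gamma>)"

fun subst :: "'a form \<Rightarrow> 'a form \<Rightarrow> 'a \<Rightarrow> 'a form" where
  "subst (Atom q) \<alpha> p = (if q = p then \<alpha> else Atom q)"
| "subst Bot \<alpha> p = Bot"
| "subst (And \<phi> \<psi>) \<alpha> p = And (subst \<phi> \<alpha> p) (subst \<psi> \<alpha> p)"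
| "subst (Or \<phi> \<psi>) \<alpha> p = Or (subst \<phi> \<alpha> p) (subst \<psi> \<alpha> p)"
| "subst (Imp \<phi> \<psi>) \<alpha> p = Imp (subst \<phi> \<alpha> p) (subst \<psi> \<alpha> p)"
| "subst (SNeg \<phi>) \<alpha> p = SNeg (subst \<phi> \<alpha> p)"

definition strongly_equiv_subst :: "'a form \<Rightarrow> 'a form \<Rightarrow> bool" where
  "strongly_equiv_subst \<alpha> \<beta> \<longleftrightarrow>
     (\<forall>\<phi> p \<Delta> T. eq_model T (\<Delta> \<union> {subst \<phi> \<alpha> p}) \<longleftrightarrow> eq_model T (\<Delta> \<union> {subst \<phi> \<beta> p}))"

end

theory Submission
  imports Defs
begin

text \<open>If \<alpha> \<Leftrightarrow> \<beta> is valid, \<alpha> and \<beta> are both satisfied and falsified by the same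
  interpretations; this agreement is preserved by substitution into any context, so
  the two substituted theories have the same models and hence the same equilibrium
  models. Conversely, if \<alpha> and \<beta> disagree at \<langle>H,T\<rangle>, then one of the contexts p and \<sim>p
  turns this into a disagreement in satisfaction. Adding the theory whose only models
  with there-world T are \<langle>H,T\<rangle> and \<langle>T,T\<rangle> then makes T an equilibrium model of exactly
  one of the two extensions.\<close>

definition X5_equiv :: "'a form \<Rightarrow> 'a form \<Rightarrow> bool" where
  "X5_equiv \<alpha> \<beta> \<longleftrightarrow>
     (\<forall>H T. interp H T \<longrightarrow> sat H T \<alpha> = sat H T \<beta> \<and> fal H T \<alpha> = fal H T \<beta>)"

lemma interp_there: "interp H T \<Longrightarrow> interp T T"
  by (simp add: interp_def)

lemma valid_SIff_iff_X5_equiv: "valid (SIff \<alpha> \<beta>) \<longleftrightarrow> X5_equiv \<alpha> \<beta>"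
  unfolding valid_def X5_equiv_def SIff_def Iff_def
  by (fastforce dest: interp_there)

lemma sat_fal_persistent:
  assumes "H \<subseteq> T"
  shows "(sat H T \<phi> \<longrightarrow> sat T T \<phi>) \<and> (fal H T \<phi> \<longrightarrow> fal T T \<phi>)"
  using assms by (induction \<phi>) auto

lemma X5_equiv_subst:
  assumes "X5_equiv \<alpha> \<beta>"
  shows "X5_equiv (subst \<phi> \<alpha> p) (subst \<phi> \<beta> p)"
proof -
  have "sat H T (subst \<phi> \<alpha> p) = sat H T (subst \<phi> \<beta> p) \<and>
        fal H T (subst \<phi> \<alpha> p) = fal H T (subst \<phi> \<beta> p)" if "interp H T" for H T
    using that
  proof (induction \<phi> arbitrary: H)
    case (Imp \<phi>\<^sub>1 \<phi>\<^sub>2)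
    then show ?case using interp_there by auto
  qed (use assms in \<open>auto simp: X5_equiv_def\<close>)
  then show ?thesis
    by (simp add: X5_equiv_def)
qed

lemma eq_model_cong:
  assumes "\<And>H. model H T \<Gamma> \<longleftrightarrow> model H T \<Gamma>'"
  shows "eq_model T \<Gamma> \<longleftrightarrow> eq_model T \<Gamma>'"
  using assms by (simp add: eq_model_def)

lemma X5_equiv_imp_strongly_equiv_subst:
  assumes "X5_equiv \<alpha> \<beta>"
  shows "strongly_equiv_subst \<alpha> \<beta>"
  unfolding strongly_equiv_subst_def
proof (intro allI eq_model_cong)
  fix \<phi> p \<Delta> H T
  show "model H T (\<Delta> \<union> {subst \<phi> \<alpha> p}) \<longleftrightarrow> model H T (\<Delta> \<union> {subst \<phi> \<beta> p})"
    using X5_equiv_subst[OF assms] by (auto simp: model_def X5_equiv_def)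
qed

fun lit_form :: "'a lit \<Rightarrow> 'a form" where
  "lit_form (Pos p) = Atom p"
| "lit_form (Neg p) = SNeg (Atom p)"

lemma sat_lit_form [simp]: "sat H T (lit_form l) \<longleftrightarrow> l \<in> H"
  by (cases l) auto

definition two_point_theory :: "'a lit set \<Rightarrow> 'a lit set \<Rightarrow> 'a form set" where
  "two_point_theory H T = lit_form ` H \<union>
     {Imp (lit_form l) (lit_form l') | l l'. l \<in> T - H \<and> l' \<in> T - H}"

lemma sat_two_point_theory_iff:
  assumes "H \<subseteq> T" and "H' \<subseteq> T"
  shows "(\<forall>\<phi> \<in> two_point_theory H T. sat H' T \<phi>) \<longleftrightarrow> H' = H \<or> H' = T"
proof
  assume sat: "\<forall>\<phi> \<in> two_point_theory H T. sat H' T \<phi>"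
  then have "H \<subseteq> H'"
    unfolding two_point_theory_def using sat_lit_form by blast
  moreover have "T \<subseteq> H'" if "l \<in> H' - H" for l
  proof
    fix l' assume "l' \<in> T"
    with that \<open>H' \<subseteq> T\<close> have "l' \<in> H \<or> Imp (lit_form l) (lit_form l') \<in> two_point_theory H T"
      by (auto simp: two_point_theory_def)
    with sat that \<open>H \<subseteq> H'\<close> show "l' \<in> H'"
      by auto
  qed
  ultimately show "H' = H \<or> H' = T"
    using \<open>H' \<subseteq> T\<close> by blast
next
  assume "H' = H \<or> H' = T"
  then show "\<forall>\<phi> \<in> two_point_theory H T. sat H' T \<phi>"
    using assms by (auto simp: two_point_theory_def)
qed

lemma eq_model_two_point_theory_iff:
  assumes "interp H T"
  shows "eq_model T (two_point_theory H T \<union> {\<phi>}) \<longleftrightarrow>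
           sat T T \<phi> \<and> (H \<subset> T \<longrightarrow> \<not> sat H T \<phi>)"
proof -
  have "H \<subseteq> T"
    using assms by (simp add: interp_def)
  then have "model H' T (two_point_theory H T \<union> {\<phi>}) \<longleftrightarrow> sat H' T \<phi> \<and> H' = H"
    if "H' \<subset> T" for H'
    using that assms sat_two_point_theory_iff[of H T H']
    by (auto simp: model_def interp_def consistent_def)
  moreover have "model T T (two_point_theory H T \<union> {\<phi>}) \<longleftrightarrow> sat T T \<phi>"
    using \<open>H \<subseteq> T\<close> interp_there[OF assms] sat_two_point_theory_iff[of H T T]
    by (auto simp: model_def)
  ultimately show ?thesis
    unfolding eq_model_def by blast
qed

lemma eq_model_separates:
  assumes "interp H T" and "sat H T A" and "\<not> sat H T B"
  shows "\<exists>\<Delta> T'. eq_model T' (\<Delta> \<union> {A}) \<noteq> eq_model T' (\<Delta> \<union> {B})"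
proof (cases "sat T T B")
  case True
  with assms have "H \<subset> T"
    by (auto simp: interp_def)
  then have "eq_model T (two_point_theory H T \<union> {B}) \<noteq> eq_model T (two_point_theory H T \<union> {A})"
    using True assms eq_model_two_point_theory_iff by blast
  then show ?thesis
    by metis
next
  case False
  have "sat T T A"
    using assms sat_fal_persistent[of H T A] by (simp add: interp_def)
  with False have "eq_model T (two_point_theory T T \<union> {A}) \<noteq> eq_model T (two_point_theory T T \<union> {B})"
    using eq_model_two_point_theory_iff[OF interp_there[OF assms(1)]] by blast
  then show ?thesis
    by blast
qed

lemma strongly_equiv_subst_imp_X5_equiv:
  assumes "strongly_equiv_subst \<alpha> \<beta>"
  shows "X5_equiv \<alpha> \<beta>"
proof (rule ccontr)
  fix p :: 'a
  assume "\<not> X5_equiv \<alpha> \<beta>"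
  then obtain H T where "interp H T" and disagree: "sat H T \<alpha> \<noteq> sat H T \<beta> \<or> fal H T \<alpha> \<noteq> fal H T \<beta>"
    by (auto simp: X5_equiv_def)
  obtain \<gamma> where "sat H T (subst \<gamma> \<alpha> p) \<noteq> sat H T (subst \<gamma> \<beta> p)"
    using disagree
  proof (elim disjE)
    show "sat H T \<alpha> \<noteq> sat H T \<beta> \<Longrightarrow> thesis"
      using that[of "Atom p"] by simp
    show "fal H T \<alpha> \<noteq> fal H T \<beta> \<Longrightarrow> thesis"
      using that[of "SNeg (Atom p)"] by simp
  qed
  then have "\<exists>\<Delta> T'. eq_model T' (\<Delta> \<union> {subst \<gamma> \<alpha> p}) \<noteq> eq_model T' (\<Delta> \<union> {subst \<gamma> \<beta> p})"
    using eq_model_separates[OF \<open>interp H T\<close>, of "subst \<gamma> \<alpha> p" "subst \<gamma> \<beta> p"]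
      eq_model_separates[OF \<open>interp H T\<close>, of "subst \<gamma> \<beta> p" "subst \<gamma> \<alpha> p"]
    by metis
  with assms show False
    unfolding strongly_equiv_subst_def by blast
qed

theorem theorem10:
  fixes \<alpha> \<beta> :: "'a form"
  shows "strongly_equiv_subst \<alpha> \<beta> \<longleftrightarrow> valid (SIff \<alpha> \<beta>)"
  using strongly_equiv_subst_imp_X5_equiv X5_equiv_imp_strongly_equiv_subst
  unfolding valid_SIff_iff_X5_equiv by blast

end
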